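(* Consider the two-agent technology adoption game. There exists $\varepsilon_0>0$ such that for every $\varepsilon\in(0,\varepsilon_0)$ there is a nonempty open interval $J\subset(0,1)$ of costs such that for every $c\in J$: with the single seed 1 there is an equilibrium in which the probability that both agents adopt is strictly greater than the probability that both adopt in every equilibrium with two seeds.
   Context: Fix $\rho\in(0,1)$, $\varepsilon\in(0,1)$, two agents $1,2$ linked to each other, state $\theta\in\{g,b\}$ with $\Pr(\theta=g)=\rho$; in state $b$ no messages are sent. Every transmission is lost independently with probability $\varepsilon$. Single seed: in state $g$ the planner sends to 1, who, if she receives it, forwards it to 2; each agent observes only whether she received a message. Two seeds: in state $g$ the planner sends to both 1 and 2; an agent who receives the planner's message forwards it to the other agent; an agent does not forward a message she received only from the other agent; each agent observes which of the two sources (planner, other agent) delivered a message to her. Technology adoption game with cost $c\in(0,1)$: each agent chooses $a_i\in\{0,1\}$ (possibly mixed) as a function of her information; payoff $a_i(\mathbf 1[\theta=g\text{ and both adopt}]-c)$; equilibria are Bayesian Nash equilibria. *)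

theory Defs
  imports Complex_Main
begin

(* Generic finite Bayesian game: outcomes 'w with probability weights P,
   G w = (state is g), Si / Sj = signals of agent i and of the other agent j.
   A (mixed) strategy maps a signal to the probability of adopting. *)

definition is_strategy :: "('s \<Rightarrow> real) \<Rightarrow> bool" where
  "is_strategy a \<longleftrightarrow> (\<forall>s. 0 \<le> a s \<and> a s \<le> 1)"

definition eu :: "('w::finite \<Rightarrow> real) \<Rightarrow> ('w \<Rightarrow> bool) \<Rightarrow> ('w \<Rightarrow> 's) \<Rightarrow> ('w \<Rightarrow> 't)
                  \<Rightarrow> real \<Rightarrow> ('s \<Rightarrow> real) \<Rightarrow> ('t \<Rightarrow> real) \<Rightarrow> real" where
  "eu P G Si Sj c ai aj =
     (\<Sum>w\<in>UNIV. P w * ai (Si w) * ((if G w then aj (Sj w) else 0) - c))"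

definition is_BNE :: "('w::finite \<Rightarrow> real) \<Rightarrow> ('w \<Rightarrow> bool) \<Rightarrow> ('w \<Rightarrow> 's) \<Rightarrow> ('w \<Rightarrow> 't)
                  \<Rightarrow> real \<Rightarrow> ('s \<Rightarrow> real) \<Rightarrow> ('t \<Rightarrow> real) \<Rightarrow> bool" where
  "is_BNE P G S1 S2 c a1 a2 \<longleftrightarrow>
     is_strategy a1 \<and> is_strategy a2 \<and>
     (\<forall>b. is_strategy b \<longrightarrow> eu P G S1 S2 c b a2 \<le> eu P G S1 S2 c a1 a2) \<and>
     (\<forall>b. is_strategy b \<longrightarrow> eu P G S2 S1 c b a1 \<le> eu P G S2 S1 c a2 a1)"

definition both_adopt :: "('w::finite \<Rightarrow> real) \<Rightarrow> ('w \<Rightarrow> 's) \<Rightarrow> ('w \<Rightarrow> 't)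
                  \<Rightarrow> ('s \<Rightarrow> real) \<Rightarrow> ('t \<Rightarrow> real) \<Rightarrow> real" where
  "both_adopt P S1 S2 a1 a2 = (\<Sum>w\<in>UNIV. P w * a1 (S1 w) * a2 (S2 w))"

(* probability that a transmission is delivered (True) or lost (False) *)
definition deliv :: "real \<Rightarrow> bool \<Rightarrow> real" where
  "deliv \<epsilon> x = (if x then 1 - \<epsilon> else \<epsilon>)"

definition prior :: "real \<Rightarrow> bool \<Rightarrow> real" where
  "prior \<rho> g = (if g then \<rho> else 1 - \<rho>)"

(* Single seed. Outcome (g, x, y): g = state is good, x = planner->1 delivered,
   y = 1->2 delivered. Each agent observes whether she received a message. *)
definition P_one :: "real \<Rightarrow> real \<Rightarrow> bool \<times> bool \<times> bool \<Rightarrow> real" where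
  "P_one \<rho> \<epsilon> = (\<lambda>(g, x, y). prior \<rho> g * deliv \<epsilon> x * deliv \<epsilon> y)"

definition G_one :: "bool \<times> bool \<times> bool \<Rightarrow> bool" where
  "G_one = (\<lambda>(g, x, y). g)"

definition S1_one :: "bool \<times> bool \<times> bool \<Rightarrow> bool" where
  "S1_one = (\<lambda>(g, x, y). g \<and> x)"

definition S2_one :: "bool \<times> bool \<times> bool \<Rightarrow> bool" where
  "S2_one = (\<lambda>(g, x, y). g \<and> x \<and> y)"

(* Outcome (g, p1, p2, f12, f21): p_i = planner->i delivered,
   f12 = 1->2 forward delivered (only sent if p1), f21 = 2->1 forward delivered
   (only sent if p2). Signal of an agent = (received from planner, received from other). *)
type_synonym out2 = "bool \<times> bool \<times> bool \<times> bool \<times> bool"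

definition P_two :: "real \<Rightarrow> real \<Rightarrow> out2 \<Rightarrow> real" where
  "P_two \<rho> \<epsilon> = (\<lambda>(g, p1, p2, f12, f21).
      prior \<rho> g * deliv \<epsilon> p1 * deliv \<epsilon> p2 * deliv \<epsilon> f12 * deliv \<epsilon> f21)"

definition G_two :: "out2 \<Rightarrow> bool" where
  "G_two = (\<lambda>(g, p1, p2, f12, f21). g)"

definition S1_two :: "out2 \<Rightarrow> bool \<times> bool" where
  "S1_two = (\<lambda>(g, p1, p2, f12, f21). (g \<and> p1, g \<and> p2 \<and> f21))"

definition S2_two :: "out2 \<Rightarrow> bool \<times> bool" where
  "S2_two = (\<lambda>(g, p1, p2, f12, f21). (g \<and> p2, g \<and> p1 \<and> f12))"

end

theory Submission
  imports Defs
begin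

text \<open>Agent 1's uninformed type ``no message'' is far less likely in the good state
  with one seed (probability \<open>\<epsilon>\<close>) than with two seeds (probability \<open>\<epsilon>\<^sup>2(2 - \<epsilon>)\<close>).
  For costs between the two corresponding adoption thresholds, adopting
  unconditionally is therefore an equilibrium with one seed, so both agents adopt with
  probability 1, whereas with two seeds every equilibrium has the uninformed agent 1
  abstain, which caps the probability that both adopt at \<open>\<rho>(1 - \<epsilon>\<^sup>2(2 - \<epsilon>)) < 1\<close>.\<close>

definition signal_gain :: "('w::finite \<Rightarrow> real) \<Rightarrow> ('w \<Rightarrow> bool) \<Rightarrow> ('w \<Rightarrow> 's) \<Rightarrow> ('w \<Rightarrow> 't)
                           \<Rightarrow> real \<Rightarrow> ('t \<Rightarrow> real) \<Rightarrow> 's \<Rightarrow> real" where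
  "signal_gain P G Si Sj c aj s =
     (\<Sum>w\<in>UNIV. if Si w = s then P w * ((if G w then aj (Sj w) else 0) - c) else 0)"

lemma eu_eq_sum_signal_gain:
  fixes P :: "'w::finite \<Rightarrow> real" and Si :: "'w \<Rightarrow> 's::finite"
  shows "eu P G Si Sj c ai aj = (\<Sum>s\<in>UNIV. ai s * signal_gain P G Si Sj c aj s)"
proof -
  have "(\<Sum>s\<in>UNIV. ai s * signal_gain P G Si Sj c aj s)
      = (\<Sum>w\<in>UNIV. \<Sum>s\<in>UNIV. if Si w = s then P w * ai (Si w) * ((if G w then aj (Sj w) else 0) - c) else 0)"
    unfolding signal_gain_def sum_distrib_left
    by (subst sum.swap) (intro sum.cong refl, auto)
  also have "\<dots> = eu P G Si Sj c ai aj"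
    unfolding eu_def by (simp add: sum.delta)
  finally show ?thesis by simp
qed

lemma best_response_vanishes_at_losing_signal:
  fixes P :: "'w::finite \<Rightarrow> real" and Si :: "'w \<Rightarrow> 's::finite"
  assumes x: "is_strategy x"
    and best: "\<forall>b. is_strategy b \<longrightarrow> eu P G Si Sj c b y \<le> eu P G Si Sj c x y"
    and losing: "signal_gain P G Si Sj c y s < 0"
  shows "x s = 0"
proof -
  have "is_strategy (x(s := 0))"
    using x unfolding is_strategy_def by auto
  then have "eu P G Si Sj c (x(s := 0)) y - eu P G Si Sj c x y \<le> 0"
    using best by simp
  also have "eu P G Si Sj c (x(s := 0)) y - eu P G Si Sj c x y = - x s * signal_gain P G Si Sj c y s"
  proof -
    have "\<And>s'. ((x(s := 0)) s' - x s') * signal_gain P G Si Sj c y s'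
                = (if s' = s then - x s * signal_gain P G Si Sj c y s else 0)"
      by simp
    then show ?thesis
      unfolding eu_eq_sum_signal_gain sum_subtractf[symmetric] left_diff_distrib[symmetric]
      by (simp add: sum.delta)
  qed
  finally have "0 \<le> x s * signal_gain P G Si Sj c y s" by simp
  with losing have "x s \<le> 0" by (simp add: zero_le_mult_iff)
  with x show ?thesis unfolding is_strategy_def by (meson order_antisym)
qed

lemma always_adopt_best_response:
  fixes P :: "'w::finite \<Rightarrow> real" and Si :: "'w \<Rightarrow> 's::finite"
  assumes "\<forall>s. 0 \<le> signal_gain P G Si Sj c y s" and "is_strategy b"
  shows "eu P G Si Sj c b y \<le> eu P G Si Sj c (\<lambda>_. 1) y"
  unfolding eu_eq_sum_signal_gain
  using assms by (auto simp: is_strategy_def intro!: sum_mono mult_left_le_one_le)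

lemma always_adopt_is_BNE:
  fixes P :: "'w::finite \<Rightarrow> real" and S1 :: "'w \<Rightarrow> 's::finite" and S2 :: "'w \<Rightarrow> 't::finite"
  assumes "\<forall>s. 0 \<le> signal_gain P G S1 S2 c (\<lambda>_. 1) s"
    and "\<forall>t. 0 \<le> signal_gain P G S2 S1 c (\<lambda>_. 1) t"
  shows "is_BNE P G S1 S2 c (\<lambda>_. 1) (\<lambda>_. 1)"
  unfolding is_BNE_def
  using always_adopt_best_response[OF assms(1)] always_adopt_best_response[OF assms(2)]
  by (simp add: is_strategy_def)

lemma signal_gain_le_always_adopt:
  assumes "\<forall>w. 0 \<le> P w" and "is_strategy y"
  shows "signal_gain P G Si Sj c y s \<le> signal_gain P G Si Sj c (\<lambda>_. 1) s"
  unfolding signal_gain_def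
  using assms by (auto simp: is_strategy_def intro!: sum_mono mult_left_mono)

lemma both_adopt_le_if_abstains:
  assumes "\<forall>w. 0 \<le> P w" and "is_strategy a1" and "is_strategy a2" and "a1 s = 0"
  shows "both_adopt P S1 S2 a1 a2 \<le> (\<Sum>w\<in>UNIV. if S1 w = s then 0 else P w)"
  unfolding both_adopt_def
proof (rule sum_mono)
  fix w
  have "a1 (S1 w) * a2 (S2 w) \<le> 1"
    using assms(2,3) unfolding is_strategy_def by (simp add: mult_le_one)
  then have "P w * (a1 (S1 w) * a2 (S2 w)) \<le> P w"
    using assms(1) mult_left_mono[of _ 1 "P w"] by simp
  then show "P w * a1 (S1 w) * a2 (S2 w) \<le> (if S1 w = s then 0 else P w)"
    using assms(4) by (simp add: mult.assoc)
qed

text \<open>An agent facing a partner who always adopts, and who receives no message with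
  probability \<open>m\<close> in the good state, gains \<open>\<rho>m - c(1 - \<rho> + \<rho>m)\<close> from adopting when
  uninformed; this is nonnegative exactly below the following threshold.\<close>

definition adoption_threshold :: "real \<Rightarrow> real \<Rightarrow> real" where
  "adoption_threshold \<rho> m = \<rho> * m / (1 - \<rho> + \<rho> * m)"

lemma uninformed_gain_eq:
  assumes "0 < \<rho>" "\<rho> < 1" "0 \<le> m"
  shows "\<rho> * m - c * (1 - \<rho> + \<rho> * m) = (1 - \<rho> + \<rho> * m) * (adoption_threshold \<rho> m - c)"
proof -
  have "0 < 1 - \<rho> + \<rho> * m" using assms by (simp add: add_pos_nonneg)
  then show ?thesis unfolding adoption_threshold_def by (simp add: field_simps)
qed

lemma uninformed_gain_nonneg:
  assumes "0 < \<rho>" "\<rho> < 1" "0 \<le> m" "c \<le> adoption_threshold \<rho> m"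
  shows "0 \<le> \<rho> * m - c * (1 - \<rho> + \<rho> * m)"
proof -
  have "0 \<le> 1 - \<rho> + \<rho> * m" using assms by simp
  with assms show ?thesis by (simp add: uninformed_gain_eq)
qed

lemma adoption_threshold_less_one:
  assumes "0 < \<rho>" "\<rho> < 1" "0 \<le> m"
  shows "adoption_threshold \<rho> m < 1"
  using assms by (simp add: adoption_threshold_def divide_simps add_pos_nonneg)

lemma adoption_threshold_nonneg:
  assumes "0 < \<rho>" "\<rho> < 1" "0 \<le> m"
  shows "0 \<le> adoption_threshold \<rho> m"
  using assms by (simp add: adoption_threshold_def add_pos_nonneg)

lemma adoption_threshold_strict_mono:
  assumes "0 < \<rho>" "\<rho> < 1" "0 \<le> m" "m < m'"
  shows "adoption_threshold \<rho> m < adoption_threshold \<rho> m'"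
proof -
  have "0 < 1 - \<rho> + \<rho> * m" "0 < 1 - \<rho> + \<rho> * m'"
    using assms by (simp_all add: add_pos_nonneg)
  moreover have "\<rho> * m * (1 - \<rho>) < \<rho> * m' * (1 - \<rho>)"
    using assms by simp
  ultimately show ?thesis
    unfolding adoption_threshold_def by (simp add: divide_simps algebra_simps)
qed

lemmas sum_UNIV_bool_tuple = UNIV_Times_UNIV[symmetric] sum.cartesian_product split_def UNIV_bool

lemma P_one_total: "(\<Sum>w\<in>UNIV. P_one \<rho> \<epsilon> w) = 1"
  by (simp add: sum_UNIV_bool_tuple P_one_def prior_def deliv_def del: UNIV_Times_UNIV)
     (simp add: algebra_simps)

lemma signal_gain_one_seed_agent1:
  "signal_gain (P_one \<rho> \<epsilon>) G_one S1_one S2_one c (\<lambda>_. 1) s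
     = (if s then \<rho> * (1 - \<epsilon>) * (1 - c) else \<rho> * \<epsilon> - c * (1 - \<rho> + \<rho> * \<epsilon>))"
  by (simp add: signal_gain_def sum_UNIV_bool_tuple P_one_def G_one_def S1_one_def prior_def deliv_def
      del: UNIV_Times_UNIV) (simp add: algebra_simps)

lemma signal_gain_one_seed_agent2:
  "signal_gain (P_one \<rho> \<epsilon>) G_one S2_one S1_one c (\<lambda>_. 1) s
     = (if s then \<rho> * (1 - \<epsilon>)\<^sup>2 * (1 - c)
        else \<rho> * (\<epsilon> * (2 - \<epsilon>)) - c * (1 - \<rho> + \<rho> * (\<epsilon> * (2 - \<epsilon>))))"
  by (simp add: signal_gain_def sum_UNIV_bool_tuple P_one_def G_one_def S2_one_def prior_def deliv_def
      del: UNIV_Times_UNIV) (simp add: algebra_simps power2_eq_square)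

lemma signal_gain_two_seeds_agent1_uninformed:
  "signal_gain (P_two \<rho> \<epsilon>) G_two S1_two S2_two c (\<lambda>_. 1) (False, False)
     = \<rho> * (\<epsilon>\<^sup>2 * (2 - \<epsilon>)) - c * (1 - \<rho> + \<rho> * (\<epsilon>\<^sup>2 * (2 - \<epsilon>)))"
  by (simp add: signal_gain_def sum_UNIV_bool_tuple P_two_def G_two_def S1_two_def prior_def deliv_def
      del: UNIV_Times_UNIV) (simp add: algebra_simps power2_eq_square)

lemma prob_two_seeds_agent1_informed:
  "(\<Sum>w\<in>UNIV. if S1_two w = (False, False) then 0 else P_two \<rho> \<epsilon> w) = \<rho> * (1 - \<epsilon>\<^sup>2 * (2 - \<epsilon>))"
  by (simp add: sum_UNIV_bool_tuple P_two_def S1_two_def prior_def deliv_def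
      del: UNIV_Times_UNIV) (simp add: algebra_simps power2_eq_square)

lemma one_seed_always_adopt_is_BNE:
  assumes "0 < \<rho>" "\<rho> < 1" "0 < \<epsilon>" "\<epsilon> < 1" and c: "c < adoption_threshold \<rho> \<epsilon>"
  shows "is_BNE (P_one \<rho> \<epsilon>) G_one S1_one S2_one c (\<lambda>_. 1) (\<lambda>_. 1)"
proof (rule always_adopt_is_BNE)
  have "\<epsilon> * (2 - \<epsilon>) = \<epsilon> + \<epsilon> * (1 - \<epsilon>)" by (simp add: algebra_simps)
  moreover have "0 < \<epsilon> * (1 - \<epsilon>)" using assms by simp
  ultimately have "\<epsilon> < \<epsilon> * (2 - \<epsilon>)" by linarith
  then have "c \<le> adoption_threshold \<rho> (\<epsilon> * (2 - \<epsilon>))"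
    using assms adoption_threshold_strict_mono[of \<rho> \<epsilon> "\<epsilon> * (2 - \<epsilon>)"] by linarith
  then have uninformed2: "0 \<le> \<rho> * (\<epsilon> * (2 - \<epsilon>)) - c * (1 - \<rho> + \<rho> * (\<epsilon> * (2 - \<epsilon>)))"
    using assms by (intro uninformed_gain_nonneg) auto
  have uninformed1: "0 \<le> \<rho> * \<epsilon> - c * (1 - \<rho> + \<rho> * \<epsilon>)"
    using assms by (intro uninformed_gain_nonneg) auto
  have "c < 1" using c adoption_threshold_less_one[of \<rho> \<epsilon>] assms by simp
  then have informed: "0 \<le> \<rho> * (1 - \<epsilon>) * (1 - c)" "0 \<le> \<rho> * (1 - \<epsilon>)\<^sup>2 * (1 - c)"
    using assms by simp_all
  show "\<forall>s. 0 \<le> signal_gain (P_one \<rho> \<epsilon>) G_one S1_one S2_one c (\<lambda>_. 1) s"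
    using uninformed1 informed by (simp add: signal_gain_one_seed_agent1)
  show "\<forall>t. 0 \<le> signal_gain (P_one \<rho> \<epsilon>) G_one S2_one S1_one c (\<lambda>_. 1) t"
    using uninformed2 informed by (simp add: signal_gain_one_seed_agent2)
qed

lemma P_two_nonneg:
  assumes "0 < \<rho>" "\<rho> < 1" "0 < \<epsilon>" "\<epsilon> < 1"
  shows "0 \<le> P_two \<rho> \<epsilon> w"
  using assms by (cases w) (simp add: P_two_def prior_def deliv_def)

lemma two_seeds_both_adopt_less_one:
  assumes "0 < \<rho>" "\<rho> < 1" "0 < \<epsilon>" "\<epsilon> < 1"
    and c: "adoption_threshold \<rho> (\<epsilon>\<^sup>2 * (2 - \<epsilon>)) < c"
    and bne: "is_BNE (P_two \<rho> \<epsilon>) G_two S1_two S2_two c b1 b2"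
  shows "both_adopt (P_two \<rho> \<epsilon>) S1_two S2_two b1 b2 < 1"
proof -
  let ?m = "\<epsilon>\<^sup>2 * (2 - \<epsilon>)"
  have m: "0 < ?m" using assms by simp
  have P: "\<forall>w. 0 \<le> P_two \<rho> \<epsilon> w" using assms P_two_nonneg by blast
  have b: "is_strategy b1" "is_strategy b2"
    and best: "\<forall>b. is_strategy b \<longrightarrow>
      eu (P_two \<rho> \<epsilon>) G_two S1_two S2_two c b b2 \<le> eu (P_two \<rho> \<epsilon>) G_two S1_two S2_two c b1 b2"
    using bne unfolding is_BNE_def by blast+
  have \<rho>m: "0 < \<rho> * ?m" using assms m by simp
  then have "0 < 1 - \<rho> + \<rho> * ?m" using assms by linarith
  with c have "(1 - \<rho> + \<rho> * ?m) * (adoption_threshold \<rho> ?m - c) < 0"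
    by (simp add: mult_pos_neg)
  then have "signal_gain (P_two \<rho> \<epsilon>) G_two S1_two S2_two c (\<lambda>_. 1) (False, False) < 0"
    using assms m by (simp add: signal_gain_two_seeds_agent1_uninformed uninformed_gain_eq)
  then have "signal_gain (P_two \<rho> \<epsilon>) G_two S1_two S2_two c b2 (False, False) < 0"
    using signal_gain_le_always_adopt[OF P b(2), of G_two S1_two S2_two c "(False, False)"]
    by linarith
  then have "b1 (False, False) = 0"
    by (rule best_response_vanishes_at_losing_signal[OF b(1) best])
  then have "both_adopt (P_two \<rho> \<epsilon>) S1_two S2_two b1 b2 \<le> \<rho> * (1 - ?m)"
    using both_adopt_le_if_abstains[OF P b, of "(False, False)" S1_two S2_two]
    by (simp only: prob_two_seeds_agent1_informed)
  also have "\<dots> = \<rho> - \<rho> * ?m" by (simp add: right_diff_distrib)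
  also have "\<dots> < 1" using assms \<rho>m by linarith
  finally show ?thesis .
qed

lemma one_seed_beats_two_seeds:
  assumes "0 < \<rho>" "\<rho> < 1" "0 < \<epsilon>" "\<epsilon> < 1"
    and "adoption_threshold \<rho> (\<epsilon>\<^sup>2 * (2 - \<epsilon>)) < c" "c < adoption_threshold \<rho> \<epsilon>"
  shows "\<exists>a1 a2. is_BNE (P_one \<rho> \<epsilon>) G_one S1_one S2_one c a1 a2 \<and>
           (\<forall>b1 b2. is_BNE (P_two \<rho> \<epsilon>) G_two S1_two S2_two c b1 b2 \<longrightarrow>
              both_adopt (P_two \<rho> \<epsilon>) S1_two S2_two b1 b2
                < both_adopt (P_one \<rho> \<epsilon>) S1_one S2_one a1 a2)"
proof -
  have "both_adopt (P_one \<rho> \<epsilon>) S1_one S2_one (\<lambda>_. 1) (\<lambda>_. 1) = 1"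
    by (simp add: both_adopt_def P_one_total)
  with assms show ?thesis
    by (intro exI[of _ "\<lambda>_. 1"] conjI allI impI)
      (simp_all add: one_seed_always_adopt_is_BNE two_seeds_both_adopt_less_one)
qed

lemma adoption_thresholds_ordered:
  assumes "0 < \<rho>" "\<rho> < 1" "0 < \<epsilon>" "\<epsilon> < 1"
  shows "0 \<le> adoption_threshold \<rho> (\<epsilon>\<^sup>2 * (2 - \<epsilon>))"
    and "adoption_threshold \<rho> (\<epsilon>\<^sup>2 * (2 - \<epsilon>)) < adoption_threshold \<rho> \<epsilon>"
    and "adoption_threshold \<rho> \<epsilon> \<le> 1"
proof -
  have "\<epsilon> * (2 - \<epsilon>) = 1 - (1 - \<epsilon>)\<^sup>2"
    by (simp add: power2_eq_square algebra_simps)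
  with assms have "\<epsilon> * (\<epsilon> * (2 - \<epsilon>)) < \<epsilon> * 1"
    by (intro mult_strict_left_mono) auto
  then show "adoption_threshold \<rho> (\<epsilon>\<^sup>2 * (2 - \<epsilon>)) < adoption_threshold \<rho> \<epsilon>"
    using assms by (intro adoption_threshold_strict_mono) (auto simp: power2_eq_square mult.assoc)
  show "0 \<le> adoption_threshold \<rho> (\<epsilon>\<^sup>2 * (2 - \<epsilon>))"
    using assms by (intro adoption_threshold_nonneg) auto
  show "adoption_threshold \<rho> \<epsilon> \<le> 1"
    using assms adoption_threshold_less_one[of \<rho> \<epsilon>] by simp
qed

theorem mainTheorem11:
  fixes \<rho> :: real
  assumes "0 < \<rho>" and "\<rho> < 1"
  shows "\<exists>\<epsilon>0>0. \<forall>\<epsilon>::real. 0 < \<epsilon> \<and> \<epsilon> < 1 \<and> \<epsilon> < \<epsilon>0 \<longrightarrow>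
           (\<exists>lo hi::real. 0 \<le> lo \<and> lo < hi \<and> hi \<le> 1 \<and>
              (\<forall>c. lo < c \<and> c < hi \<longrightarrow>
                 (\<exists>a1 a2. is_BNE (P_one \<rho> \<epsilon>) G_one S1_one S2_one c a1 a2 \<and>
                    (\<forall>b1 b2. is_BNE (P_two \<rho> \<epsilon>) G_two S1_two S2_two c b1 b2 \<longrightarrow>
                       both_adopt (P_two \<rho> \<epsilon>) S1_two S2_two b1 b2
                         < both_adopt (P_one \<rho> \<epsilon>) S1_one S2_one a1 a2))))"
proof (rule exI[of _ 1], intro conjI allI impI)
  fix \<epsilon> :: real
  assume "0 < \<epsilon> \<and> \<epsilon> < 1 \<and> \<epsilon> < 1"
  then have \<epsilon>: "0 < \<epsilon>" "\<epsilon> < 1" by auto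
  show "\<exists>lo hi. 0 \<le> lo \<and> lo < hi \<and> hi \<le> 1 \<and> (\<forall>c. lo < c \<and> c < hi \<longrightarrow>
      (\<exists>a1 a2. is_BNE (P_one \<rho> \<epsilon>) G_one S1_one S2_one c a1 a2 \<and>
        (\<forall>b1 b2. is_BNE (P_two \<rho> \<epsilon>) G_two S1_two S2_two c b1 b2 \<longrightarrow>
           both_adopt (P_two \<rho> \<epsilon>) S1_two S2_two b1 b2 < both_adopt (P_one \<rho> \<epsilon>) S1_one S2_one a1 a2)))"
    by (rule exI[of _ "adoption_threshold \<rho> (\<epsilon>\<^sup>2 * (2 - \<epsilon>))"],
        rule exI[of _ "adoption_threshold \<rho> \<epsilon>"])
      (use adoption_thresholds_ordered[OF assms \<epsilon>] one_seed_beats_two_seeds[OF assms \<epsilon>] in blast)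
qed simp

end
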